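(* Assume $a\le p/2$. Define $$k_*=\begin{cases}p/2-\lfloor -a\rfloor,& p\text{ even},\\ (p+1)/2+\lfloor a\rfloor,& p\text{ odd and }a-\lfloor a\rfloor\le 1/2,\\ (p+1)/2+\lfloor a\rfloor+1,& p\text{ odd and }a-\lfloor a\rfloor>1/2.\end{cases}$$ Then $k_*\in\{1,\dots,p\}$. For $\tilde\lambda^2\in(0,\infty)^p$ let $\tilde\lambda^2_{(1)}\le\dots\le\tilde\lambda^2_{(p)}$ be its order statistics and $\tilde\lambda^2_*=\tilde\lambda^2_{(k_* )}$. Let $B_*=k_*$ and $$A_*=\begin{cases}a+\lfloor -a\rfloor+1,& p\text{ even},\\ 1/2+a-\lfloor a\rfloor,& p\text{ odd and }a-\lfloor a\rfloor\le1/2,\\ a-\lfloor a\rfloor-1/2,& p\text{ odd and }a-\lfloor a\rfloor>1/2.\end{cases}$$ (i) For all $\varepsilon>0$ and all $\tilde\lambda^2\in(0,\infty)^p$, $$E\big[(\tau^2)^{-\varepsilon}\mid\tilde\lambda^2\big]\le\frac{\int_0^\infty t^{-\varepsilon}\,t^{A_*-1}(c+t)^{-(a+b)}(\tilde\lambda^2_*+t)^{-(A_*+p/2-a)}dt}{\int_0^\infty t^{A_*-1}(c+t)^{-(a+b)}(\tilde\lambda^2_*+t)^{-(A_*+p/2-a)}dt}.$$ (ii) For all $\gamma>0$ and all $\tilde\lambda^2\in(0,\infty)^p$, $$E\Big[\frac{\tau^2}{\gamma+\tau^2}\,\Big|\,\tilde\lambda^2\Big]\le\frac{\int_0^\infty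 \frac{t}{\gamma+t}\,t^{p/2+a-1}(c+t)^{-(a+b)}(\tilde\lambda^2_*+t)^{-B_*}dt}{\int_0^\infty t^{p/2+a-1}(c+t)^{-(a+b)}(\tilde\lambda^2_*+t)^{-B_*}dt}.$$ (iii) Assume moreover $a\notin\mathbb N$ if $p$ is even and $a\notin\mathbb N-1/2$ if $p$ is odd. Then for all $\gamma>0$ and $\eta>0$ there exists $\delta>0$ such that for all $\tilde\lambda^2\in(0,\infty)^p$ with $\tilde\lambda^2_*<\delta$, $0\le E[\tau^2/(\gamma+\tau^2)\mid\tilde\lambda^2]<\eta$.
   Context: Let $p\ge1$ and $a,b,c>0$, and let $\pi_\tau(t)=t^{a-1}(c+t)^{-(a+b)}/C(a,b,c)$ for $t>0$, where $C(a,b,c)=\int_0^\infty t^{a-1}(c+t)^{-(a+b)}\,dt$. For $\tilde\lambda^2\in(0,\infty)^p$, $E[\,\cdot\mid\tilde\lambda^2]$ denotes expectation with respect to $\tau^2$ having the density on $(0,\infty)$ proportional to $t\mapsto\pi_\tau(t)\prod_{k=1}^pt^{1/2}/(\tilde\lambda_k^2+t)$. $\lfloor x\rfloor$ is the greatest integer $\le x$; $\mathbb N=\{1,2,\dots\}$ and $\mathbb N-1/2=\{1/2,3/2,\dots\}$. *)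

theory Defs
  imports "HOL-Analysis.Analysis"
begin

definition kstar :: "nat \<Rightarrow> real \<Rightarrow> int" where
  "kstar p a =
     (if even p then int (p div 2) - \<lfloor>-a\<rfloor>
      else if a - real_of_int \<lfloor>a\<rfloor> \<le> 1/2 then int ((p+1) div 2) + \<lfloor>a\<rfloor>
      else int ((p+1) div 2) + \<lfloor>a\<rfloor> + 1)"

definition Astar :: "nat \<Rightarrow> real \<Rightarrow> real" where
  "Astar p a =
     (if even p then a + real_of_int \<lfloor>-a\<rfloor> + 1
      else if a - real_of_int \<lfloor>a\<rfloor> \<le> 1/2 then 1/2 + a - real_of_int \<lfloor>a\<rfloor>
      else a - real_of_int \<lfloor>a\<rfloor> - 1/2)"

definition ord_stat :: "nat \<Rightarrow> (nat \<Rightarrow> real) \<Rightarrow> nat \<Rightarrow> real" where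
  "ord_stat p lam k = sort (map lam [1..<p+1]) ! (k - 1)"

definition wratio :: "(real \<Rightarrow> real) \<Rightarrow> (real \<Rightarrow> real) \<Rightarrow> ennreal" where
  "wratio f w =
     (\<integral>\<^sup>+ t. ennreal (f t * w t) * indicator {0<..} t \<partial>lborel) /
     (\<integral>\<^sup>+ t. ennreal (w t) * indicator {0<..} t \<partial>lborel)"

text \<open>Unnormalised prior density of tau^2 (the constant C(a,b,c) cancels).\<close>
definition pi_tau :: "real \<Rightarrow> real \<Rightarrow> real \<Rightarrow> real \<Rightarrow> real" where
  "pi_tau a b c t = t powr (a - 1) * (c + t) powr (-(a + b))"

text \<open>Unnormalised conditional density of tau^2 given lam.\<close>
definition post_w :: "nat \<Rightarrow> real \<Rightarrow> real \<Rightarrow> real \<Rightarrow> (nat \<Rightarrow> real) \<Rightarrow> real \<Rightarrow> real" where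
  "post_w p a b c lam t = pi_tau a b c t * (\<Prod>k\<in>{1..p}. t powr (1/2) / (lam k + t))"

definition condE :: "nat \<Rightarrow> real \<Rightarrow> real \<Rightarrow> real \<Rightarrow> (nat \<Rightarrow> real) \<Rightarrow> (real \<Rightarrow> real) \<Rightarrow> ennreal" where
  "condE p a b c lam f = wratio f (post_w p a b c lam)"

end

theory Submission
  imports Defs
begin

text \<open>
  For t > 0 the posterior weight of tau^2 is t^(a+p/2-1) (c+t)^(-(a+b)) / prod_j (lam_j + t),
  which factors as rho(t) w(t), where w is the comparison weight of the theorem and
  rho(t) = t^d (lam_* + t)^m / prod_j (lam_j + t). Because lam_* is the k_*-th order statistic,
  rho splits into factors that are monotone in t: nondecreasing for d = k_* - 1, m = p - d
  (part (i)) and nonincreasing for d = 0, m = k_* (part (ii)). A Chebyshev-type inequality for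
  oppositely ordered functions then compares the two conditional expectations.
  For (iii), the excluded values of a are exactly those with k_* = p/2 + a; otherwise the
  normalising integral of w grows like lam_*^(p/2+a-k_*) as lam_* tends to 0, while its integral
  against t/(gamma+t) stays bounded.
\<close>

section \<open>Integrals over the half-line\<close>

lemma nn_integral_halfline_nonzero:
  fixes g :: "real \<Rightarrow> real"
  assumes [measurable]: "g \<in> borel_measurable borel" and pos: "\<And>t. t > 0 \<Longrightarrow> g t > 0"
  shows "(\<integral>\<^sup>+t. ennreal (g t) * indicator {0<..} t \<partial>lborel) \<noteq> 0"
proof
  assume "(\<integral>\<^sup>+t. ennreal (g t) * indicator {0<..} t \<partial>lborel) = 0"
  then have "AE t in lborel. ennreal (g t) * indicator {0<..} t = 0"
    by (simp add: nn_integral_0_iff_AE)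
  then have "AE t in lborel. t \<notin> {0::real<..}"
    by eventually_elim (use pos in \<open>fastforce simp: indicator_def\<close>)
  then have "emeasure lborel {0::real<..} = 0"
    by (subst (asm) AE_iff_measurable[of "{0<..}"]) auto
  moreover have "emeasure lborel {0::real<..1} \<le> emeasure lborel {0::real<..}"
    by (intro emeasure_mono) auto
  ultimately show False by simp
qed

lemma nn_integral_halfline_finite:
  fixes g :: "real \<Rightarrow> real"
  assumes [measurable]: "g \<in> borel_measurable borel" and "\<alpha> > 0" "\<beta> > 0" "C \<ge> 0" "D \<ge> 0"
    and near0: "\<And>t. 0 < t \<Longrightarrow> t \<le> 1 \<Longrightarrow> g t \<le> C * t powr (\<alpha> - 1)"
    and near_inf: "\<And>t. 1 < t \<Longrightarrow> g t \<le> D * t powr (-\<beta> - 1)"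
  shows "(\<integral>\<^sup>+t. ennreal (g t) * indicator {0<..} t \<partial>lborel) < \<infinity>"
proof -
  have "((\<lambda>t. C * t powr (\<alpha> - 1)) has_integral C * (1 powr (\<alpha> - 1 + 1) / (\<alpha> - 1 + 1))) {0..1}"
    by (intro has_integral_mult_right has_integral_powr_from_0) (use assms in auto)
  then have I0: "(\<integral>\<^sup>+t. ennreal (C * t powr (\<alpha> - 1)) * indicator {0..1} t \<partial>lborel) = ennreal (C / \<alpha>)"
    by (subst nn_integral_has_integral_lebesgue') (use assms in auto)
  have "((\<lambda>t. D * t powr (-\<beta> - 1)) has_integral D * (-(1 powr (-\<beta> - 1 + 1)) / (-\<beta> - 1 + 1))) {1..}"
    by (intro has_integral_mult_right has_integral_powr_to_inf) (use assms in auto)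
  then have I1: "(\<integral>\<^sup>+t. ennreal (D * t powr (-\<beta> - 1)) * indicator {1..} t \<partial>lborel) = ennreal (D / \<beta>)"
    by (subst nn_integral_has_integral_lebesgue') (use assms in auto)
  have "(\<integral>\<^sup>+t. ennreal (g t) * indicator {0<..} t \<partial>lborel) \<le>
     (\<integral>\<^sup>+t. ennreal (C * t powr (\<alpha> - 1)) * indicator {0..1} t
              + ennreal (D * t powr (-\<beta> - 1)) * indicator {1..} t \<partial>lborel)"
  proof (intro nn_integral_mono)
    fix t :: real
    consider "t \<le> 0" | "0 < t" "t \<le> 1" | "1 < t" by linarith
    then show "ennreal (g t) * indicator {0<..} t \<le> ennreal (C * t powr (\<alpha> - 1)) * indicator {0..1} t
              + ennreal (D * t powr (-\<beta> - 1)) * indicator {1..} t"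
    proof cases
      case 2
      then have "ennreal (g t) \<le> ennreal (C * t powr (\<alpha> - 1))" by (intro ennreal_leI near0)
      with 2 show ?thesis by (simp add: indicator_def add_increasing2)
    next
      case 3
      then have "ennreal (g t) \<le> ennreal (D * t powr (-\<beta> - 1))" by (intro ennreal_leI near_inf)
      with 3 show ?thesis by (simp add: indicator_def)
    qed (simp add: indicator_def)
  qed
  also have "\<dots> = ennreal (C / \<alpha>) + ennreal (D / \<beta>)"
    by (subst nn_integral_add) (auto simp: I0 I1)
  also have "\<dots> < \<infinity>" by simp
  finally show ?thesis .
qed

lemma nn_integral_halfline_eq_ennreal:
  fixes g :: "real \<Rightarrow> real"
  assumes "g \<in> borel_measurable borel" "\<And>t. t > 0 \<Longrightarrow> g t > 0"
    and "(\<integral>\<^sup>+t. ennreal (g t) * indicator {0<..} t \<partial>lborel) < \<infinity>"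
  obtains G where "(\<integral>\<^sup>+t. ennreal (g t) * indicator {0<..} t \<partial>lborel) = ennreal G" "G > 0"
proof -
  obtain G where "G \<ge> 0" "(\<integral>\<^sup>+t. ennreal (g t) * indicator {0<..} t \<partial>lborel) = ennreal G"
    using assms(3) by (cases "\<integral>\<^sup>+t. ennreal (g t) * indicator {0<..} t \<partial>lborel" rule: ennreal_cases) auto
  moreover have "G \<noteq> 0"
    using nn_integral_halfline_nonzero[OF assms(1,2)] calculation(2) by auto
  ultimately show ?thesis using that by simp
qed

lemma divide_left_antimono_ennreal:
  fixes x Z :: ennreal
  assumes "ennreal z \<le> Z" "z > 0"
  shows "x / Z \<le> x / ennreal z"
proof -
  have "inverse Z \<le> inverse (ennreal z)"
  proof (cases Z rule: ennreal_cases)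
    case (real r)
    then show ?thesis using assms by (simp add: inverse_ennreal le_imp_inverse_le)
  qed simp
  then show ?thesis by (simp add: divide_ennreal_def mult_left_mono)
qed

section \<open>A monotone likelihood ratio inequality\<close>

lemma ex_ratio_le_normalizing_quotient:
  fixes f g r :: "real \<Rightarrow> real"
  assumes [measurable]: "f \<in> borel_measurable borel" "g \<in> borel_measurable borel"
    and gpos: "\<And>t. t > 0 \<Longrightarrow> g t > 0" and fr: "\<And>t. t > 0 \<Longrightarrow> f t = r t * g t"
    and F: "(\<integral>\<^sup>+t. ennreal (f t) * indicator {0<..} t \<partial>lborel) = ennreal F" "F > 0"
    and G: "(\<integral>\<^sup>+t. ennreal (g t) * indicator {0<..} t \<partial>lborel) = ennreal G" "G > 0"
  shows "\<exists>s>0. r s \<le> F / G"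
proof (rule ccontr)
  define c0 where "c0 = F / G"
  have c0: "c0 > 0" "ennreal c0 * ennreal G = ennreal F"
    using F G by (simp_all add: c0_def ennreal_mult'[symmetric])
  assume "\<not> (\<exists>s>0. r s \<le> F / G)"
  then have gt: "f t - c0 * g t > 0" if "t > 0" for t
  proof -
    have "c0 * g t < r t * g t"
      using \<open>\<not> _\<close> that gpos[OF that] by (intro mult_strict_right_mono) (auto simp: c0_def)
    then show ?thesis using fr[OF that] by simp
  qed
  define X where "X = (\<integral>\<^sup>+t. ennreal (f t - c0 * g t) * indicator {0<..} t \<partial>lborel)"
  have "ennreal F = (\<integral>\<^sup>+t. ennreal (f t - c0 * g t) * indicator {0<..} t
                          + ennreal c0 * (ennreal (g t) * indicator {0<..} t) \<partial>lborel)"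
    unfolding F(1)[symmetric]
  proof (intro nn_integral_cong)
    fix t :: real
    show "ennreal (f t) * indicator {0<..} t = ennreal (f t - c0 * g t) * indicator {0<..} t
                          + ennreal c0 * (ennreal (g t) * indicator {0<..} t)"
      using gt[of t] gpos[of t] c0(1)
      by (cases "t > 0") (simp_all add: ennreal_mult'[symmetric] ennreal_plus[symmetric] del: ennreal_plus)
  qed
  also have "\<dots> = X + ennreal F"
    unfolding X_def c0(2)[symmetric] by (subst nn_integral_add) (auto simp: nn_integral_cmult G)
  finally have "X = 0"
    using ennreal_add_left_cancel[of "ennreal F" X 0] by (simp add: add.commute)
  moreover have "X \<noteq> 0"
    unfolding X_def by (rule nn_integral_halfline_nonzero) (use gt in auto)
  ultimately show False by contradiction
qed

lemma separating_level:
  fixes h r :: "real \<Rightarrow> real"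
  assumes hnn: "\<And>t. t > 0 \<Longrightarrow> h t \<ge> 0"
    and opp: "\<And>s t. s > 0 \<Longrightarrow> t > 0 \<Longrightarrow> r s < r t \<Longrightarrow> h t \<le> h s"
    and s0: "s0 > 0" "r s0 \<le> c0"
  obtains H where "H \<ge> 0" "\<And>t. t > 0 \<Longrightarrow> (h t - H) * (r t - c0) \<le> 0"
proof -
  define T where "T = {t. t > 0 \<and> r t > c0}"
  define H where "H = (if T = {} then 0 else Sup (h ` T))"
  have below: "h u \<le> h s" if "u \<in> T" "s > 0" "r s \<le> c0" for u s
    using that opp[of s u] by (auto simp: T_def)
  have upper: "h u \<le> H" if "u \<in> T" for u
  proof -
    have "bdd_above (h ` T)" using below[OF _ s0] by (intro bdd_aboveI[of _ "h s0"]) auto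
    then show ?thesis using that by (auto simp: H_def intro: cSup_upper)
  qed
  have lower: "H \<le> h s" if "s > 0" "r s \<le> c0" for s
    using that below hnn by (auto simp: H_def intro!: cSup_least)
  show ?thesis
  proof
    show "H \<ge> 0"
    proof (cases "T = {}")
      case False
      then obtain u where "u \<in> T" by blast
      then show ?thesis using upper[of u] hnn[of u] by (auto simp: T_def)
    qed (simp add: H_def)
    show "(h t - H) * (r t - c0) \<le> 0" if "t > 0" for t
    proof (cases "r t \<le> c0")
      case True then show ?thesis using lower[OF that True] by (simp add: mult_nonneg_nonpos)
    next
      case False then have "t \<in> T" using that by (auto simp: T_def)
      then show ?thesis using upper False by (simp add: mult_nonpos_nonneg)
    qed
  qed
qed

lemma nn_integral_halfline_le_of_affine_bound:
  fixes f g h :: "real \<Rightarrow> real"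
  assumes [measurable]: "f \<in> borel_measurable borel" "g \<in> borel_measurable borel" "h \<in> borel_measurable borel"
    and nonneg: "\<And>t. t > 0 \<Longrightarrow> 0 \<le> f t \<and> 0 \<le> g t \<and> 0 \<le> h t" and "H \<ge> 0" "c0 \<ge> 0"
    and pointwise: "\<And>t. t > 0 \<Longrightarrow> h t * f t + H * c0 * g t \<le> c0 * h t * g t + H * f t"
    and F: "(\<integral>\<^sup>+t. ennreal (f t) * indicator {0<..} t \<partial>lborel) = ennreal F"
    and G: "(\<integral>\<^sup>+t. ennreal (g t) * indicator {0<..} t \<partial>lborel) = ennreal G"
    and "F = c0 * G"
  shows "(\<integral>\<^sup>+t. ennreal (h t * f t) * indicator {0<..} t \<partial>lborel)
    \<le> ennreal c0 * (\<integral>\<^sup>+t. ennreal (h t * g t) * indicator {0<..} t \<partial>lborel)"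
    (is "?Ihf \<le> ennreal c0 * ?Ihg")
proof -
  have "?Ihf + ennreal (H * c0) * ennreal G
     = (\<integral>\<^sup>+t. ennreal (h t * f t) * indicator {0<..} t
                + ennreal (H * c0) * (ennreal (g t) * indicator {0<..} t) \<partial>lborel)"
    by (subst nn_integral_add) (auto simp: nn_integral_cmult G)
  also have "\<dots> \<le> (\<integral>\<^sup>+t. ennreal c0 * (ennreal (h t * g t) * indicator {0<..} t)
                + ennreal H * (ennreal (f t) * indicator {0<..} t) \<partial>lborel)"
  proof (intro nn_integral_mono)
    fix t :: real
    show "ennreal (h t * f t) * indicator {0<..} t + ennreal (H * c0) * (ennreal (g t) * indicator {0<..} t)
      \<le> ennreal c0 * (ennreal (h t * g t) * indicator {0<..} t) + ennreal H * (ennreal (f t) * indicator {0<..} t)"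
    proof (cases "t > 0")
      case True
      have "0 \<le> h t * f t" "0 \<le> H * c0 * g t" "0 \<le> c0 * h t * g t" "0 \<le> H * f t"
        using nonneg[OF True] assms(5,6) by auto
      then have "ennreal (h t * f t) + ennreal (H * c0 * g t) \<le> ennreal (c0 * h t * g t) + ennreal (H * f t)"
        using pointwise[OF True] by (simp add: ennreal_plus[symmetric] del: ennreal_plus)
      then show ?thesis using True assms(5,6) by (simp add: ennreal_mult'[symmetric] mult.assoc)
    qed simp
  qed
  also have "\<dots> = ennreal c0 * ?Ihg + ennreal H * ennreal F"
    by (subst nn_integral_add) (auto simp: nn_integral_cmult F)
  also have "ennreal H * ennreal F = ennreal (H * c0) * ennreal G"
    using assms(5,6) \<open>F = c0 * G\<close> by (simp add: ennreal_mult'[symmetric] mult.assoc)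
  finally have "ennreal (H * c0) * ennreal G + ?Ihf \<le> ennreal (H * c0) * ennreal G + ennreal c0 * ?Ihg"
    by (simp only: add.commute)
  then show ?thesis
    by (simp add: ennreal_add_left_cancel_le ennreal_mult_eq_top_iff)
qed

lemma wratio_le_of_oppositely_ordered_ratio:
  fixes f g h r :: "real \<Rightarrow> real"
  assumes [measurable]: "f \<in> borel_measurable borel" "g \<in> borel_measurable borel" "h \<in> borel_measurable borel"
    and fpos: "\<And>t. t > 0 \<Longrightarrow> f t > 0" and gpos: "\<And>t. t > 0 \<Longrightarrow> g t > 0"
    and fr: "\<And>t. t > 0 \<Longrightarrow> f t = r t * g t"
    and hnn: "\<And>t. t > 0 \<Longrightarrow> h t \<ge> 0"
    and opp: "\<And>s t. s > 0 \<Longrightarrow> t > 0 \<Longrightarrow> r s < r t \<Longrightarrow> h t \<le> h s"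
    and f_fin: "(\<integral>\<^sup>+t. ennreal (f t) * indicator {0<..} t \<partial>lborel) < \<infinity>"
    and g_fin: "(\<integral>\<^sup>+t. ennreal (g t) * indicator {0<..} t \<partial>lborel) < \<infinity>"
  shows "wratio h f \<le> wratio h g"
proof -
  obtain F where F: "(\<integral>\<^sup>+t. ennreal (f t) * indicator {0<..} t \<partial>lborel) = ennreal F" "F > 0"
    using nn_integral_halfline_eq_ennreal[of f] fpos f_fin by auto
  obtain G where G: "(\<integral>\<^sup>+t. ennreal (g t) * indicator {0<..} t \<partial>lborel) = ennreal G" "G > 0"
    using nn_integral_halfline_eq_ennreal[of g] gpos g_fin by auto
  define c0 where "c0 = F / G"
  have c0: "c0 > 0" "F = c0 * G" using F G by (simp_all add: c0_def)
  obtain s0 where "s0 > 0" "r s0 \<le> c0"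
    using ex_ratio_le_normalizing_quotient[of f g r F G] assms F G by (auto simp: c0_def)
  then obtain H where H: "H \<ge> 0" "\<And>t. t > 0 \<Longrightarrow> (h t - H) * (r t - c0) \<le> 0"
    using separating_level[of h r s0 c0] hnn opp by blast
  \<comment> \<open>Integrating \<open>g (h - H) (r - c0) \<le> 0\<close>, the \<open>H\<close>-terms cancel because \<open>\<integral> f = c0 \<integral> g\<close>.\<close>
  have "h t * f t + H * c0 * g t \<le> c0 * h t * g t + H * f t" if t: "t > 0" for t
  proof -
    have "g t * ((h t - H) * (r t - c0)) \<le> 0"
      using H(2)[OF t] gpos[OF t] by (simp add: mult_nonneg_nonpos)
    then show ?thesis using fr[OF t] by (simp add: algebra_simps)
  qed
  then have "(\<integral>\<^sup>+t. ennreal (h t * f t) * indicator {0<..} t \<partial>lborel)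
      \<le> ennreal c0 * (\<integral>\<^sup>+t. ennreal (h t * g t) * indicator {0<..} t \<partial>lborel)"
    using fpos gpos hnn H(1) c0 F(1) G(1)
    by (intro nn_integral_halfline_le_of_affine_bound) (auto intro: less_imp_le)
  then have "wratio h f \<le> ennreal c0 * (\<integral>\<^sup>+t. ennreal (h t * g t) * indicator {0<..} t \<partial>lborel) / ennreal F"
    unfolding wratio_def F(1) by (rule divide_right_mono_ennreal)
  also have "\<dots> = (\<integral>\<^sup>+t. ennreal (h t * g t) * indicator {0<..} t \<partial>lborel) * (ennreal c0 * inverse (ennreal F))"
    by (simp add: divide_ennreal_def ac_simps)
  also have "ennreal c0 * inverse (ennreal F) = inverse (ennreal G)"
    using F(2) G(2) by (simp add: inverse_ennreal ennreal_mult'[symmetric] c0_def inverse_eq_divide)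
  also have "(\<integral>\<^sup>+t. ennreal (h t * g t) * indicator {0<..} t \<partial>lborel) * inverse (ennreal G) = wratio h g"
    unfolding wratio_def G(1) divide_ennreal_def ..
  finally show ?thesis .
qed

section \<open>Comparison weights\<close>

definition powr_weight :: "real \<Rightarrow> real \<Rightarrow> real \<Rightarrow> real \<Rightarrow> real \<Rightarrow> real \<Rightarrow> real" where
  "powr_weight \<alpha> s \<kappa> c l t = t powr (\<alpha> - 1) * (c + t) powr (-s) * (l + t) powr (-\<kappa>)"

lemma powr_weight_measurable [measurable]: "powr_weight \<alpha> s \<kappa> c l \<in> borel_measurable borel"
  unfolding powr_weight_def by measurable

lemma powr_weight_pos: "0 < c \<Longrightarrow> 0 < l \<Longrightarrow> 0 < t \<Longrightarrow> 0 < powr_weight \<alpha> s \<kappa> c l t"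
  by (simp add: powr_weight_def)

lemma powr_weight_integral_finite:
  assumes "\<alpha> > 0" "c > 0" "l > 0" "s \<ge> 0" "\<kappa> \<ge> 0" "s + \<kappa> > \<alpha>"
  shows "(\<integral>\<^sup>+t. ennreal (powr_weight \<alpha> s \<kappa> c l t) * indicator {0<..} t \<partial>lborel) < \<infinity>"
proof (rule nn_integral_halfline_finite[where \<alpha> = \<alpha> and \<beta> = "s + \<kappa> - \<alpha>" and C = "c powr (-s) * l powr (-\<kappa>)" and D = 1])
  fix t :: real assume t: "0 < t" "t \<le> 1"
  have "(c + t) powr (-s) \<le> c powr (-s)" "(l + t) powr (-\<kappa>) \<le> l powr (-\<kappa>)"
    using assms t by (simp_all add: powr_mono2')
  then have "powr_weight \<alpha> s \<kappa> c l t \<le> t powr (\<alpha> - 1) * c powr (-s) * l powr (-\<kappa>)"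
    unfolding powr_weight_def by (intro mult_mono mult_left_mono) simp_all
  then show "powr_weight \<alpha> s \<kappa> c l t \<le> c powr (-s) * l powr (-\<kappa>) * t powr (\<alpha> - 1)"
    by (simp only: ac_simps)
next
  fix t :: real assume t: "1 < t"
  have "(c + t) powr (-s) \<le> t powr (-s)" "(l + t) powr (-\<kappa>) \<le> t powr (-\<kappa>)"
    using assms t by (simp_all add: powr_mono2')
  then have "powr_weight \<alpha> s \<kappa> c l t \<le> t powr (\<alpha> - 1) * t powr (-s) * t powr (-\<kappa>)"
    unfolding powr_weight_def by (intro mult_mono mult_left_mono) simp_all
  also have "\<dots> = 1 * t powr ((\<alpha> - 1) + (-s) + (-\<kappa>))"
    by (simp only: powr_add mult_1)
  also have "(\<alpha> - 1) + (-s) + (-\<kappa>) = - (s + \<kappa> - \<alpha>) - 1"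
    by simp
  finally show "powr_weight \<alpha> s \<kappa> c l t \<le> 1 * t powr (- (s + \<kappa> - \<alpha>) - 1)" .
qed (use assms in \<open>simp_all add: powr_weight_measurable\<close>)

lemma shrinkage_times_powr_weight_le:
  assumes "0 < t" "0 < l" "0 \<le> \<kappa>" "0 < \<gamma>"
  shows "t / (\<gamma> + t) * powr_weight \<alpha> s \<kappa> c l t \<le> powr_weight (\<alpha> - \<kappa> + 1) s 1 c \<gamma> t"
proof -
  have "(l + t) powr (-\<kappa>) \<le> t powr (-\<kappa>)"
    using assms by (intro powr_mono2') auto
  then have "t / (\<gamma> + t) * powr_weight \<alpha> s \<kappa> c l t
      \<le> t / (\<gamma> + t) * (t powr (\<alpha> - 1) * (c + t) powr (-s) * t powr (-\<kappa>))"
    unfolding powr_weight_def using assms by (intro mult_left_mono) auto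
  also have "\<dots> = (t powr 1 * t powr (\<alpha> - 1) * t powr (-\<kappa>)) * (c + t) powr (-s) * (\<gamma> + t) powr (-1)"
    using assms by (simp add: powr_minus_divide)
  also have "t powr 1 * t powr (\<alpha> - 1) * t powr (-\<kappa>) = t powr (1 + (\<alpha> - 1) + (-\<kappa>))"
    by (simp only: powr_add)
  also have "1 + (\<alpha> - 1) + (-\<kappa>) = \<alpha> - \<kappa> + 1 - 1"
    by simp
  finally show ?thesis unfolding powr_weight_def .
qed

lemma powr_weight_integral_lower_bound:
  assumes "0 < \<alpha>" "0 \<le> s" "0 \<le> \<kappa>" "0 < c" "0 < l" "l \<le> 1"
  shows "ennreal ((c + 1) powr (-s) * 2 powr (-\<kappa>) / \<alpha> * l powr (\<alpha> - \<kappa>))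
    \<le> (\<integral>\<^sup>+t. ennreal (powr_weight \<alpha> s \<kappa> c l t) * indicator {0<..} t \<partial>lborel)"
proof -
  define C where "C = (c + 1) powr (-s) * (2 * l) powr (-\<kappa>)"
  have "((\<lambda>t. C * t powr (\<alpha> - 1)) has_integral C * (l powr (\<alpha> - 1 + 1) / (\<alpha> - 1 + 1))) {0..l}"
    by (intro has_integral_mult_right has_integral_powr_from_0) (use assms in auto)
  then have I: "(\<integral>\<^sup>+t. ennreal (C * t powr (\<alpha> - 1)) * indicator {0..l} t \<partial>lborel) = ennreal (C * (l powr \<alpha> / \<alpha>))"
    by (subst nn_integral_has_integral_lebesgue') (auto simp: C_def)
  have "(c + 1) powr (-s) * 2 powr (-\<kappa>) / \<alpha> * l powr (\<alpha> - \<kappa>) = C * (l powr \<alpha> / \<alpha>)"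
    using assms by (simp add: C_def powr_mult powr_diff powr_minus_divide)
  then have "ennreal ((c + 1) powr (-s) * 2 powr (-\<kappa>) / \<alpha> * l powr (\<alpha> - \<kappa>))
      = (\<integral>\<^sup>+t. ennreal (C * t powr (\<alpha> - 1)) * indicator {0..l} t \<partial>lborel)"
    by (simp only: I)
  also have "\<dots> \<le> (\<integral>\<^sup>+t. ennreal (powr_weight \<alpha> s \<kappa> c l t) * indicator {0<..} t \<partial>lborel)"
  proof (intro nn_integral_mono)
    fix t :: real
    show "ennreal (C * t powr (\<alpha> - 1)) * indicator {0..l} t \<le> ennreal (powr_weight \<alpha> s \<kappa> c l t) * indicator {0<..} t"
    proof (cases "0 < t \<and> t \<le> l")
      case True
      have "(c + 1) powr (-s) \<le> (c + t) powr (-s)" "(2 * l) powr (-\<kappa>) \<le> (l + t) powr (-\<kappa>)"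
        using assms True by (auto intro!: powr_mono2')
      then have "C * t powr (\<alpha> - 1) \<le> powr_weight \<alpha> s \<kappa> c l t"
        unfolding C_def powr_weight_def by (simp add: mult_mono mult.commute mult.left_commute)
      then show ?thesis using True by (simp add: ennreal_leI)
    qed (auto simp: indicator_def)
  qed
  finally show ?thesis .
qed

lemma powr_neg_exponent_large_near_0:
  fixes \<theta> Q :: real
  assumes "\<theta> < 0" "Q > 0"
  obtains \<delta> where "0 < \<delta>" "\<delta> \<le> 1" "\<And>l. 0 < l \<Longrightarrow> l < \<delta> \<Longrightarrow> Q < l powr \<theta>"
proof
  define \<delta> where "\<delta> = min 1 (Q powr (1 / \<theta>))"
  show "0 < \<delta>" "\<delta> \<le> 1" using assms by (simp_all add: \<delta>_def)
  fix l assume l: "0 < l" "l < \<delta>"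
  have "Q = (Q powr (1 / \<theta>)) powr \<theta>"
    using assms by (simp add: powr_powr)
  also have "\<dots> \<le> \<delta> powr \<theta>"
    using assms by (intro powr_mono2') (auto simp: \<delta>_def)
  also have "\<dots> < l powr \<theta>"
    using l assms by (intro powr_less_mono2_neg) auto
  finally show "Q < l powr \<theta>" .
qed

lemma wratio_shrinkage_powr_weight_vanishes:
  assumes "0 < \<alpha>" "\<alpha> < \<kappa>" "\<kappa> < \<alpha> + 1" "0 \<le> s" "0 < c" "0 < \<gamma>" "0 < \<eta>"
  shows "\<exists>\<delta>>0. \<forall>l. 0 < l \<and> l < \<delta> \<longrightarrow> wratio (\<lambda>t. t / (\<gamma> + t)) (powr_weight \<alpha> s \<kappa> c l) < ennreal \<eta>"
proof -
  define \<theta> where "\<theta> = \<alpha> - \<kappa>"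
  have "\<theta> < 0" "0 < \<theta> + 1" using assms by (simp_all add: \<theta>_def)
  have "(\<integral>\<^sup>+t. ennreal (powr_weight (\<theta> + 1) s 1 c \<gamma> t) * indicator {0<..} t \<partial>lborel) < \<infinity>"
    using assms \<open>\<theta> < 0\<close> \<open>0 < \<theta> + 1\<close> by (intro powr_weight_integral_finite) auto
  then obtain M where M: "(\<integral>\<^sup>+t. ennreal (powr_weight (\<theta> + 1) s 1 c \<gamma> t) * indicator {0<..} t \<partial>lborel) = ennreal M" "M \<ge> 0"
    by (cases "\<integral>\<^sup>+t. ennreal (powr_weight (\<theta> + 1) s 1 c \<gamma> t) * indicator {0<..} t \<partial>lborel" rule: ennreal_cases) auto
  define K where "K = (c + 1) powr (-s) * 2 powr (-\<kappa>) / \<alpha>"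
  have "K > 0" using assms by (simp add: K_def)
  \<comment> \<open>The denominator grows like \<open>K l\<^sup>\<theta>\<close> as \<open>l \<rightarrow> 0\<close> while the numerator stays below \<open>M\<close>.\<close>
  obtain \<delta> where "0 < \<delta>" "\<delta> \<le> 1" and \<delta>: "\<And>l. 0 < l \<Longrightarrow> l < \<delta> \<Longrightarrow> (M + 1) / (K * \<eta>) < l powr \<theta>"
    using powr_neg_exponent_large_near_0[OF \<open>\<theta> < 0\<close>, of "(M + 1) / (K * \<eta>)"] M(2) \<open>K > 0\<close> assms(7) by auto
  show ?thesis
  proof (intro exI[of _ \<delta>] conjI allI impI \<open>0 < \<delta>\<close>)
    fix l assume l: "0 < l \<and> l < \<delta>"
    then have "M < \<eta> * (K * l powr \<theta>)"
      using \<delta>[of l] \<open>K > 0\<close> assms(7) by (simp add: field_simps)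
    have "(\<integral>\<^sup>+t. ennreal (t / (\<gamma> + t) * powr_weight \<alpha> s \<kappa> c l t) * indicator {0<..} t \<partial>lborel) \<le> ennreal M"
      unfolding M(1)[symmetric] \<theta>_def
      using shrinkage_times_powr_weight_le[of _ l \<kappa> \<gamma> \<alpha> s c] l assms
      by (intro nn_integral_mono) (auto simp: ennreal_leI indicator_def)
    then have "wratio (\<lambda>t. t / (\<gamma> + t)) (powr_weight \<alpha> s \<kappa> c l)
        \<le> ennreal M / (\<integral>\<^sup>+t. ennreal (powr_weight \<alpha> s \<kappa> c l t) * indicator {0<..} t \<partial>lborel)"
      unfolding wratio_def by (rule divide_right_mono_ennreal)
    also have "\<dots> \<le> ennreal M / ennreal (K * l powr \<theta>)"
      using powr_weight_integral_lower_bound[of \<alpha> s \<kappa> c l] assms l \<open>\<delta> \<le> 1\<close> \<open>K > 0\<close>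
      by (intro divide_left_antimono_ennreal) (auto simp: K_def \<theta>_def)
    also have "\<dots> = ennreal (M / (K * l powr \<theta>))"
      using M(2) \<open>K > 0\<close> l by (simp add: divide_ennreal)
    also have "\<dots> < ennreal \<eta>"
      using \<open>M < \<eta> * (K * l powr \<theta>)\<close> \<open>K > 0\<close> l assms(7)
      by (intro ennreal_lessI) (auto simp: divide_less_eq mult.commute)
    finally show "wratio (\<lambda>t. t / (\<gamma> + t)) (powr_weight \<alpha> s \<kappa> c l) < ennreal \<eta>" .
  qed
qed

section \<open>Order statistics and the index k*\<close>

lemma length_filter_map_upt:
  "length (filter P (map lam [1..<p+1])) = card {j\<in>{1..p}. P (lam j)}"
proof -
  have "length (filter P (map lam [1..<p+1])) = length (filter (P \<circ> lam) [1..<p+1])"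
    by (simp add: filter_map)
  also have "\<dots> = card (set (filter (P \<circ> lam) [1..<p+1]))"
    by (rule distinct_card[symmetric]) simp
  also have "set (filter (P \<circ> lam) [1..<p+1]) = {j\<in>{1..p}. P (lam j)}" by auto
  finally show ?thesis .
qed

lemma card_filter_ord_stat: "card {j\<in>{1..p}. P (lam j)} = length (filter P (sort (map lam [1..<p+1])))"
  by (metis length_filter_map_upt mset_filter mset_sort size_mset)

lemma card_less_ord_stat:
  assumes "1 \<le> k" "k \<le> p"
  shows "card {j\<in>{1..p}. lam j < ord_stat p lam k} \<le> k - 1"
proof -
  define xs where "xs = sort (map lam [1..<p+1])"
  define x where "x = ord_stat p lam k"
  have x: "x = xs ! (k - 1)" "length xs = p" "sorted xs" by (simp_all add: x_def ord_stat_def xs_def)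
  have "\<not> y < x" if "y \<in> set (drop (k - 1) xs)" for y
  proof -
    from that obtain i where "i < length (drop (k - 1) xs)" "y = drop (k - 1) xs ! i"
      by (auto simp: in_set_conv_nth)
    then have "y = xs ! (k - 1 + i)" "k - 1 + i < length xs" using assms by auto
    then show ?thesis using sorted_nth_mono[OF x(3), of "k - 1" "k - 1 + i"] x(1) by auto
  qed
  then have "filter (\<lambda>y. y < x) xs = filter (\<lambda>y. y < x) (take (k - 1) xs)"
    by (metis append.right_neutral append_take_drop_id filter_append filter_False)
  then have "length (filter (\<lambda>y. y < x) xs) \<le> k - 1"
    by (metis length_filter_le length_take min.bounded_iff order.refl)
  then show ?thesis
    unfolding x_def[symmetric] card_filter_ord_stat[where P = "\<lambda>y. y < x"] xs_def[symmetric] .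
qed

lemma ex_subset_le_ord_stat:
  assumes "1 \<le> k" "k \<le> p"
  shows "\<exists>K \<subseteq> {1..p}. card K = k \<and> (\<forall>j\<in>K. lam j \<le> ord_stat p lam k)"
proof -
  define xs where "xs = sort (map lam [1..<p+1])"
  define x where "x = ord_stat p lam k"
  have x: "x = xs ! (k - 1)" "length xs = p" "sorted xs" by (simp_all add: x_def ord_stat_def xs_def)
  have "y \<le> x" if "y \<in> set (take k xs)" for y
  proof -
    from that obtain i where "i < k" "i < length xs" "y = xs ! i"
      by (auto simp: in_set_conv_nth)
    then show ?thesis using sorted_nth_mono[OF x(3), of i "k - 1"] x(1,2) assms by auto
  qed
  then have "k = length (filter (\<lambda>y. y \<le> x) (take k xs))"
    using assms x(2) by (simp add: filter_True)
  also have "\<dots> \<le> length (filter (\<lambda>y. y \<le> x) xs)"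
    by (metis append_take_drop_id filter_append length_append le_add1)
  also have "\<dots> = card {j\<in>{1..p}. lam j \<le> x}"
    by (simp only: card_filter_ord_stat[symmetric] xs_def)
  finally obtain K where "K \<subseteq> {j\<in>{1..p}. lam j \<le> x}" "card K = k"
    by (meson obtain_subset_with_card_n)
  then show ?thesis unfolding x_def by blast
qed

lemma ord_stat_mem:
  assumes "1 \<le> k" "k \<le> p"
  shows "ord_stat p lam k \<in> lam ` {1..p}"
proof -
  have "ord_stat p lam k \<in> set (sort (map lam [1..<p+1]))"
    using assms unfolding ord_stat_def by (intro nth_mem) (simp del: upt_Suc)
  then show ?thesis by (auto simp del: upt_Suc)
qed

lemma ord_stat_pos:
  assumes "1 \<le> k" "k \<le> p" "\<forall>j\<in>{1..p}. lam j > 0"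
  shows "ord_stat p lam k > 0"
  using ord_stat_mem[OF assms(1,2), of lam] assms(3) by auto

lemma kstar_Astar_cases:
  obtains (even) "even p" "real_of_int (kstar p a) = real p / 2 - \<lfloor>-a\<rfloor>" "Astar p a = a + \<lfloor>-a\<rfloor> + 1"
  | (odd_low) "odd p" "a - \<lfloor>a\<rfloor> \<le> 1/2"
      "real_of_int (kstar p a) = real p / 2 + 1/2 + \<lfloor>a\<rfloor>" "Astar p a = 1/2 + a - \<lfloor>a\<rfloor>"
  | (odd_high) "odd p" "1/2 < a - \<lfloor>a\<rfloor>"
      "real_of_int (kstar p a) = real p / 2 + 3/2 + \<lfloor>a\<rfloor>" "Astar p a = a - \<lfloor>a\<rfloor> - 1/2"
proof (cases "even p")
  case True
  then have "real (p div 2) = real p / 2" by (auto elim!: evenE)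
  then show ?thesis using True even by (simp add: kstar_def Astar_def)
next
  case False
  then have "real ((p + 1) div 2) = real p / 2 + 1/2" by (auto elim!: oddE simp: field_simps)
  then show ?thesis using False odd_low odd_high by (cases "a - \<lfloor>a\<rfloor> \<le> 1/2") (simp_all add: kstar_def Astar_def)
qed

lemma kstar_bounds:
  fixes p :: nat and a :: real
  shows "real p / 2 + a \<le> real_of_int (kstar p a)"
    and "real_of_int (kstar p a) < real p / 2 + a + 1"
    and "a + real p / 2 - Astar p a = real_of_int (kstar p a) - 1"
    and "Astar p a > 0"
  by (cases p a rule: kstar_Astar_cases; linarith)+

lemma kstar_range:
  assumes "a > 0" "a \<le> real p / 2"
  shows "kstar p a \<in> {1..int p}"
  using kstar_bounds(1,2)[of p a] assms by simp

lemma kstar_gt: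
  assumes "a > 0"
    and "(even p \<longrightarrow> a \<notin> \<nat>) \<and> (odd p \<longrightarrow> (\<forall>n::nat. n \<ge> 1 \<longrightarrow> a \<noteq> real n - 1/2))"
  shows "real p / 2 + a < real_of_int (kstar p a)"
proof (rule ccontr)
  assume "\<not> ?thesis"
  then have eq: "real_of_int (kstar p a) = real p / 2 + a"
    using kstar_bounds(1)[of p a] by linarith
  show False
  proof (cases p a rule: kstar_Astar_cases)
    case even
    then have "a = real (nat (- \<lfloor>-a\<rfloor>))" using eq assms(1) by simp
    then have "a \<in> \<nat>" by (metis of_nat_in_Nats)
    with assms(2) even(1) show False by blast
  next
    case odd_low
    then have "a = real_of_int (\<lfloor>a\<rfloor> + 1) - 1/2" using eq by simp
    moreover have "\<lfloor>a\<rfloor> \<ge> 0" using assms(1) by simp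
    ultimately have "a = real (nat (\<lfloor>a\<rfloor> + 1)) - 1/2" "nat (\<lfloor>a\<rfloor> + 1) \<ge> 1" by auto
    with assms(2) odd_low(1) show False by blast
  next
    case odd_high
    then show False using eq by linarith
  qed
qed

section \<open>Factorisation of the posterior density\<close>

lemma shifted_ratio_mono:
  fixes l x s t :: real
  assumes "0 < s" "s \<le> t" "0 \<le> l" "l \<le> x"
  shows "(l + s) / (x + s) \<le> (l + t) / (x + t)"
proof -
  have "(l + s) * (x + t) \<le> (l + t) * (x + s)"
    using mult_right_mono[OF assms(2), of "x - l"] assms(4) by (simp add: algebra_simps)
  then show ?thesis using assms by (simp add: divide_simps)
qed

lemma shifted_ratio_antimono:
  fixes l x s t :: real
  assumes "0 < s" "s \<le> t" "0 < x" "x \<le> l"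
  shows "(l + t) / (x + t) \<le> (l + s) / (x + s)"
proof -
  have "(l + t) * (x + s) \<le> (l + s) * (x + t)"
    using mult_right_mono[OF assms(2), of "l - x"] assms(4) by (simp add: algebra_simps)
  then show ?thesis using assms by (simp add: divide_simps)
qed

lemma power_shift_div_prod_antimono:
  fixes lam :: "'a \<Rightarrow> real"
  assumes "finite I" "K \<subseteq> I" "\<forall>j\<in>K. lam j \<le> l" "\<forall>j\<in>I. lam j > 0" "0 < s" "s \<le> t"
  shows "(l + t) ^ card K / (\<Prod>j\<in>I. lam j + t) \<le> (l + s) ^ card K / (\<Prod>j\<in>I. lam j + s)"
proof -
  have split: "(l + x) ^ card K / (\<Prod>j\<in>I. lam j + x)
      = (\<Prod>j\<in>K. (l + x) / (lam j + x)) * (\<Prod>j\<in>I - K. 1 / (lam j + x))" for x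
    using prod.subset_diff[OF assms(2,1), of "\<lambda>j. lam j + x"]
    by (simp add: prod_dividef)
  have "(\<Prod>j\<in>K. (l + t) / (lam j + t)) * (\<Prod>j\<in>I - K. 1 / (lam j + t))
      \<le> (\<Prod>j\<in>K. (l + s) / (lam j + s)) * (\<Prod>j\<in>I - K. 1 / (lam j + s))"
  proof (intro mult_mono prod_mono conjI prod_nonneg)
    fix j assume "j \<in> K"
    then have "0 < lam j" "lam j \<le> l" using assms(2-4) by auto
    then show "(l + t) / (lam j + t) \<le> (l + s) / (lam j + s)"
      using shifted_ratio_antimono[OF assms(5,6)] by auto
  next
    fix j assume "j \<in> I - K"
    then have "0 < lam j" using assms(4) by auto
    then show "1 / (lam j + t) \<le> 1 / (lam j + s)"
      using assms(5,6) by (auto simp: divide_simps)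
  qed (use assms in \<open>force intro!: divide_nonneg_nonneg add_nonneg_nonneg less_imp_le\<close>)+
  then show ?thesis unfolding split .
qed

lemma power_mixed_div_prod_mono:
  fixes lam :: "'a \<Rightarrow> real"
  assumes "finite I" "card {j\<in>I. lam j < l} \<le> d" "d \<le> card I" "\<forall>j\<in>I. lam j > 0" "l > 0"
    and "0 < s" "s \<le> t"
  shows "s ^ d * (l + s) ^ (card I - d) / (\<Prod>j\<in>I. lam j + s)
       \<le> t ^ d * (l + t) ^ (card I - d) / (\<Prod>j\<in>I. lam j + t)"
proof -
  define L where "L = {j\<in>I. lam j < l}"
  obtain e where e: "d = card L + e" using assms(2) le_Suc_ex unfolding L_def by blast
  obtain f where f: "card I = d + f" using assms(3) le_Suc_ex by blast
  have L: "L \<subseteq> I" "finite L" using assms(1) by (auto simp: L_def)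
  have cardR: "card (I - L) = f + e" using card_Diff_subset[OF L(2,1)] e f by simp
  \<comment> \<open>Below \<open>l\<close> each \<open>lam j\<close> contributes an increasing factor \<open>x / (lam j + x)\<close>, above it \<open>(l + x) / (lam j + x)\<close>.\<close>
  have split: "x ^ d * (l + x) ^ (card I - d) / (\<Prod>j\<in>I. lam j + x)
      = (x / (l + x)) ^ e * (\<Prod>j\<in>L. x / (lam j + x)) * (\<Prod>j\<in>I - L. (l + x) / (lam j + x))" if "x > 0" for x
  proof -
    have "l + x \<noteq> 0" using that assms(5) by simp
    then show ?thesis
      using prod.subset_diff[OF L(1) assms(1), of "\<lambda>j. lam j + x"] that
      by (simp add: prod_dividef cardR e f power_add power_divide field_simps)
  qed
  have "(s / (l + s)) ^ e * (\<Prod>j\<in>L. s / (lam j + s)) * (\<Prod>j\<in>I - L. (l + s) / (lam j + s))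
     \<le> (t / (l + t)) ^ e * (\<Prod>j\<in>L. t / (lam j + t)) * (\<Prod>j\<in>I - L. (l + t) / (lam j + t))"
  proof (intro mult_mono power_mono prod_mono conjI prod_nonneg mult_nonneg_nonneg zero_le_power)
    show "s / (l + s) \<le> t / (l + t)"
      using shifted_ratio_mono[OF assms(6,7), of 0 l] assms(5) by auto
  next
    fix j assume "j \<in> L"
    then have "0 < lam j" using assms(4) by (auto simp: L_def)
    then show "s / (lam j + s) \<le> t / (lam j + t)"
      using shifted_ratio_mono[OF assms(6,7), of 0 "lam j"] by auto
  next
    fix j assume "j \<in> I - L"
    then have "0 < lam j" "l \<le> lam j" using assms(4) by (auto simp: L_def)
    then show "(l + s) / (lam j + s) \<le> (l + t) / (lam j + t)"
      using shifted_ratio_mono[OF assms(6,7), of l "lam j"] assms(5) by auto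
  qed (use assms in \<open>force simp: L_def intro!: divide_nonneg_nonneg add_nonneg_nonneg less_imp_le\<close>)+
  then show ?thesis using split assms(6,7) by simp
qed

lemma prod_shift_pos: "0 < (t::real) \<Longrightarrow> \<forall>j\<in>{1..p}. lam j > 0 \<Longrightarrow> 0 < (\<Prod>j\<in>{1..p}. lam j + t)"
  by (rule prod_pos) (auto intro: add_pos_pos)

lemma post_w_eq:
  assumes "t > 0"
  shows "post_w p a b c lam t = t powr (a + real p / 2 - 1) * (c + t) powr (-(a + b)) / (\<Prod>j\<in>{1..p}. lam j + t)"
proof -
  have "(\<Prod>j\<in>{1..p}. t powr (1/2) / (lam j + t)) = t powr (real p / 2) / (\<Prod>j\<in>{1..p}. lam j + t)"
    using assms by (simp add: prod_dividef powr_power)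
  moreover have "t powr (a + real p / 2 - 1) = t powr (a - 1) * t powr (real p / 2)"
    by (subst powr_add[symmetric]) (simp add: algebra_simps)
  ultimately show ?thesis
    unfolding post_w_def pi_tau_def by (simp add: ac_simps)
qed

lemma post_w_factor:
  assumes "t > 0" "l > 0"
  shows "post_w p a b c lam t
    = t ^ d * (l + t) ^ m / (\<Prod>j\<in>{1..p}. lam j + t) * powr_weight (a + real p / 2 - real d) (a + b) (real m) c l t"
proof -
  have "t powr (a + real p / 2 - 1) = t ^ d * t powr (a + real p / 2 - real d - 1)"
    using assms by (simp add: powr_realpow[symmetric] powr_add[symmetric] add_diff_eq)
  moreover have "(l + t) ^ m * (l + t) powr (- real m) = 1"
    using assms by (simp add: powr_realpow[symmetric] powr_add[symmetric])
  ultimately show ?thesis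
    unfolding post_w_eq[OF assms(1)] powr_weight_def by (simp add: ac_simps)
qed

lemma post_w_pos: "0 < c \<Longrightarrow> 0 < t \<Longrightarrow> \<forall>j\<in>{1..p}. lam j > 0 \<Longrightarrow> 0 < post_w p a b c lam t"
  using prod_shift_pos[of t p lam] by (simp add: post_w_eq)

lemma post_w_measurable [measurable]: "post_w p a b c lam \<in> borel_measurable borel"
  unfolding post_w_def pi_tau_def by measurable

lemma post_w_integral_finite:
  assumes "a > 0" "b > 0" "c > 0" and lam: "\<forall>j\<in>{1..p}. lam j > 0"
  shows "(\<integral>\<^sup>+t. ennreal (post_w p a b c lam t) * indicator {0<..} t \<partial>lborel) < \<infinity>"
proof -
  define l where "l = Min (insert 1 (lam ` {1..p}))"
  have "0 < l" using lam by (simp add: l_def)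
  have "l \<le> lam j" if "j \<in> {1..p}" for j
    unfolding l_def using that by (intro Min_le) auto
  have "post_w p a b c lam t \<le> powr_weight (a + real p / 2) (a + b) (real p) c l t" if t: "t > 0" for t
  proof -
    have "(\<Prod>j\<in>{1..p}. l + t) \<le> (\<Prod>j\<in>{1..p}. lam j + t)"
      using \<open>0 < l\<close> \<open>\<And>j. j \<in> {1..p} \<Longrightarrow> l \<le> lam j\<close> t by (intro prod_mono) auto
    then have "(l + t) ^ p / (\<Prod>j\<in>{1..p}. lam j + t) \<le> 1"
      using prod_shift_pos[OF t lam] by (simp add: divide_le_eq_1)
    then have "(l + t) ^ p / (\<Prod>j\<in>{1..p}. lam j + t) * powr_weight (a + real p / 2) (a + b) (real p) c l t
        \<le> powr_weight (a + real p / 2) (a + b) (real p) c l t"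
      using powr_weight_pos[OF \<open>0 < c\<close> \<open>0 < l\<close> t] prod_shift_pos[OF t lam] \<open>0 < l\<close> t
      by (intro mult_left_le_one_le) (auto intro: less_imp_le)
    then show ?thesis
      using post_w_factor[OF t \<open>0 < l\<close>, of p a b c lam 0 p] by simp
  qed
  then have "(\<integral>\<^sup>+t. ennreal (post_w p a b c lam t) * indicator {0<..} t \<partial>lborel)
      \<le> (\<integral>\<^sup>+t. ennreal (powr_weight (a + real p / 2) (a + b) (real p) c l t) * indicator {0<..} t \<partial>lborel)"
    by (intro nn_integral_mono) (simp add: ennreal_leI indicator_def)
  also have "\<dots> < \<infinity>"
    using assms \<open>0 < l\<close> by (intro powr_weight_integral_finite) auto
  finally show ?thesis .
qed

lemma condE_le_wratio_powr_weight:
  fixes h :: "real \<Rightarrow> real" and d m :: nat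
  assumes "a > 0" "b > 0" "c > 0" "l > 0" and lam: "\<forall>j\<in>{1..p}. lam j > 0"
    and "a + real p / 2 - real d > 0" "real p / 2 < real d + real m + b"
    and [measurable]: "h \<in> borel_measurable borel" and "\<And>t. t > 0 \<Longrightarrow> h t \<ge> 0"
    and "\<And>s t. 0 < s \<Longrightarrow> 0 < t
      \<Longrightarrow> s ^ d * (l + s) ^ m / (\<Prod>j\<in>{1..p}. lam j + s) < t ^ d * (l + t) ^ m / (\<Prod>j\<in>{1..p}. lam j + t)
      \<Longrightarrow> h t \<le> h s"
  shows "condE p a b c lam h \<le> wratio h (powr_weight (a + real p / 2 - real d) (a + b) (real m) c l)"
  unfolding condE_def
proof (rule wratio_le_of_oppositely_ordered_ratio[where r = "\<lambda>x. x ^ d * (l + x) ^ m / (\<Prod>j\<in>{1..p}. lam j + x)"])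
  show "(\<integral>\<^sup>+t. ennreal (powr_weight (a + real p / 2 - real d) (a + b) (real m) c l t) * indicator {0<..} t \<partial>lborel) < \<infinity>"
    using assms by (intro powr_weight_integral_finite) auto
qed (use assms post_w_pos post_w_integral_finite powr_weight_pos post_w_factor in auto)

lemma condE_powr_neg_le:
  assumes "a > 0" "b > 0" "c > 0" "a \<le> real p / 2" "\<epsilon> > 0" and lam: "\<forall>j\<in>{1..p}. lam j > 0"
  shows "condE p a b c lam (\<lambda>t. t powr (-\<epsilon>))
     \<le> wratio (\<lambda>t. t powr (-\<epsilon>))
          (\<lambda>t. t powr (Astar p a - 1) * (c + t) powr (-(a + b))
              * (ord_stat p lam (nat (kstar p a)) + t) powr (-(Astar p a + real p / 2 - a)))"
proof -
  define k where "k = nat (kstar p a)"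
  define ls where "ls = ord_stat p lam k"
  have k: "1 \<le> k" "k \<le> p" "real k = real_of_int (kstar p a)"
    using kstar_range[OF assms(1,4)] by (auto simp: k_def)
  have A: "Astar p a = a + real p / 2 - real (k - 1)" "Astar p a > 0"
    using kstar_bounds(3,4)[where p = p and a = a] k by (auto simp: of_nat_diff)
  have "ls > 0" using ord_stat_pos[OF k(1,2) lam] by (simp add: ls_def)
  have kappa: "Astar p a + real p / 2 - a = real (p - (k - 1))"
    using A(1) k by (simp add: of_nat_diff)
  have "condE p a b c lam (\<lambda>t. t powr (-\<epsilon>))
      \<le> wratio (\<lambda>t. t powr (-\<epsilon>)) (powr_weight (a + real p / 2 - real (k - 1)) (a + b) (real (p - (k - 1))) c ls)"
  proof (rule condE_le_wratio_powr_weight)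
    fix s t :: real
    assume st: "0 < s" "0 < t"
      and less: "s ^ (k - 1) * (ls + s) ^ (p - (k - 1)) / (\<Prod>j\<in>{1..p}. lam j + s)
               < t ^ (k - 1) * (ls + t) ^ (p - (k - 1)) / (\<Prod>j\<in>{1..p}. lam j + t)"
    have "\<not> t \<le> s"
    proof
      assume "t \<le> s"
      have "card {j\<in>{1..p}. lam j < ls} \<le> k - 1"
        using card_less_ord_stat[OF k(1,2)] by (simp add: ls_def)
      then have "t ^ (k - 1) * (ls + t) ^ (card {1..p} - (k - 1)) / (\<Prod>j\<in>{1..p}. lam j + t)
          \<le> s ^ (k - 1) * (ls + s) ^ (card {1..p} - (k - 1)) / (\<Prod>j\<in>{1..p}. lam j + s)"
        using k(2) lam \<open>ls > 0\<close> st \<open>t \<le> s\<close> by (intro power_mixed_div_prod_mono) auto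
      with less show False by simp
    qed
    then show "t powr (-\<epsilon>) \<le> s powr (-\<epsilon>)"
      using st \<open>\<epsilon> > 0\<close> by (intro powr_mono2') auto
  qed (use assms A k \<open>ls > 0\<close> in auto)
  also have "powr_weight (a + real p / 2 - real (k - 1)) (a + b) (real (p - (k - 1))) c ls
      = (\<lambda>t. t powr (Astar p a - 1) * (c + t) powr (-(a + b)) * (ls + t) powr (-(Astar p a + real p / 2 - a)))"
    unfolding powr_weight_def[abs_def] A(1)[symmetric] kappa[symmetric] ..
  finally show ?thesis unfolding ls_def k_def .
qed

lemma condE_shrinkage_le:
  assumes "a > 0" "b > 0" "c > 0" "a \<le> real p / 2" "\<gamma> > 0" and lam: "\<forall>j\<in>{1..p}. lam j > 0"
  shows "condE p a b c lam (\<lambda>t. t / (\<gamma> + t))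
     \<le> wratio (\<lambda>t. t / (\<gamma> + t))
          (\<lambda>t. t powr (real p / 2 + a - 1) * (c + t) powr (-(a + b))
              * (ord_stat p lam (nat (kstar p a)) + t) powr (- real_of_int (kstar p a)))"
proof -
  define k where "k = nat (kstar p a)"
  define ls where "ls = ord_stat p lam k"
  have k: "1 \<le> k" "k \<le> p" "real k = real_of_int (kstar p a)"
    using kstar_range[OF assms(1,4)] by (auto simp: k_def)
  have "ls > 0" using ord_stat_pos[OF k(1,2) lam] by (simp add: ls_def)
  obtain K where K: "K \<subseteq> {1..p}" "card K = k" "\<forall>j\<in>K. lam j \<le> ls"
    using ex_subset_le_ord_stat[OF k(1,2), of lam] by (auto simp: ls_def)
  have alpha: "a + real p / 2 - real 0 = real p / 2 + a" by simp
  have "condE p a b c lam (\<lambda>t. t / (\<gamma> + t))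
      \<le> wratio (\<lambda>t. t / (\<gamma> + t)) (powr_weight (a + real p / 2 - real 0) (a + b) (real k) c ls)"
  proof (rule condE_le_wratio_powr_weight)
    fix s t :: real
    assume st: "0 < s" "0 < t"
      and less: "s ^ 0 * (ls + s) ^ k / (\<Prod>j\<in>{1..p}. lam j + s) < t ^ 0 * (ls + t) ^ k / (\<Prod>j\<in>{1..p}. lam j + t)"
    have "\<not> s \<le> t"
      using power_shift_div_prod_antimono[of "{1..p}" K lam ls s t] K less st lam by auto
    then show "t / (\<gamma> + t) \<le> s / (\<gamma> + s)"
      using shifted_ratio_mono[of t s 0 \<gamma>] st \<open>\<gamma> > 0\<close> by auto
  next
    show "real p / 2 < real 0 + real k + b"
      using kstar_bounds(1)[of p a] k assms(1,2) by simp
  qed (use assms \<open>ls > 0\<close> in auto)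
  also have "powr_weight (a + real p / 2 - real 0) (a + b) (real k) c ls
      = (\<lambda>t. t powr (real p / 2 + a - 1) * (c + t) powr (-(a + b)) * (ls + t) powr (- real_of_int (kstar p a)))"
    unfolding powr_weight_def[abs_def] alpha k(3) ..
  finally show ?thesis unfolding ls_def k_def .
qed

lemma condE_shrinkage_vanishes:
  assumes "a > 0" "b > 0" "c > 0" "a \<le> real p / 2"
    and nonhalf: "(even p \<longrightarrow> a \<notin> \<nat>) \<and> (odd p \<longrightarrow> (\<forall>n::nat. n \<ge> 1 \<longrightarrow> a \<noteq> real n - 1/2))"
    and "\<gamma> > 0" "\<eta> > 0"
  shows "\<exists>\<delta>>0. \<forall>lam. (\<forall>k\<in>{1..p}. lam k > 0) \<and> ord_stat p lam (nat (kstar p a)) < \<delta>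
           \<longrightarrow> condE p a b c lam (\<lambda>t. t / (\<gamma> + t)) < ennreal \<eta>"
proof -
  define \<kappa> where "\<kappa> = real_of_int (kstar p a)"
  obtain \<delta> where "\<delta> > 0"
    and \<delta>: "\<And>l. 0 < l \<Longrightarrow> l < \<delta> \<Longrightarrow> wratio (\<lambda>t. t / (\<gamma> + t)) (powr_weight (real p / 2 + a) (a + b) \<kappa> c l) < ennreal \<eta>"
    using wratio_shrinkage_powr_weight_vanishes[of "real p / 2 + a" \<kappa> "a + b" c \<gamma> \<eta>]
      kstar_gt[OF assms(1) nonhalf] kstar_bounds(2)[of p a] assms
    by (auto simp: \<kappa>_def)
  show ?thesis
  proof (intro exI[of _ \<delta>] conjI allI impI \<open>\<delta> > 0\<close>)
    fix lam :: "nat \<Rightarrow> real"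
    assume lam: "(\<forall>k\<in>{1..p}. lam k > 0) \<and> ord_stat p lam (nat (kstar p a)) < \<delta>"
    have "0 < ord_stat p lam (nat (kstar p a))"
      using ord_stat_pos kstar_range[OF assms(1,4)] lam by (simp add: nat_le_iff le_nat_iff)
    have "condE p a b c lam (\<lambda>t. t / (\<gamma> + t))
        \<le> wratio (\<lambda>t. t / (\<gamma> + t)) (powr_weight (real p / 2 + a) (a + b) \<kappa> c (ord_stat p lam (nat (kstar p a))))"
      using condE_shrinkage_le[OF assms(1-4,6)] lam by (simp add: powr_weight_def[abs_def] \<kappa>_def)
    also have "\<dots> < ennreal \<eta>" using \<delta> lam \<open>0 < ord_stat p lam (nat (kstar p a))\<close> by simp
    finally show "condE p a b c lam (\<lambda>t. t / (\<gamma> + t)) < ennreal \<eta>" .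
  qed
qed

theorem mainTheorem9:
  fixes p :: nat and a b c :: real
  assumes hp: "p \<ge> 1" and ha: "a > 0" and hb: "b > 0" and hc: "c > 0"
    and hap: "a \<le> real p / 2"
  shows "kstar p a \<in> {1..int p}
    \<and> (\<forall>\<epsilon>>0. \<forall>lam :: nat \<Rightarrow> real. (\<forall>k\<in>{1..p}. lam k > 0) \<longrightarrow>
          (let ls = ord_stat p lam (nat (kstar p a)); A = Astar p a in
           condE p a b c lam (\<lambda>t. t powr (-\<epsilon>))
             \<le> wratio (\<lambda>t. t powr (-\<epsilon>))
                 (\<lambda>t. t powr (A - 1) * (c + t) powr (-(a + b))
                      * (ls + t) powr (-(A + real p / 2 - a)))))
    \<and> (\<forall>\<gamma>>0. \<forall>lam :: nat \<Rightarrow> real. (\<forall>k\<in>{1..p}. lam k > 0) \<longrightarrow>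
          (let ls = ord_stat p lam (nat (kstar p a)); B = real_of_int (kstar p a) in
           condE p a b c lam (\<lambda>t. t / (\<gamma> + t))
             \<le> wratio (\<lambda>t. t / (\<gamma> + t))
                 (\<lambda>t. t powr (real p / 2 + a - 1) * (c + t) powr (-(a + b))
                      * (ls + t) powr (-B))))
    \<and> (((even p \<longrightarrow> a \<notin> \<nat>) \<and> (odd p \<longrightarrow> (\<forall>n::nat. n \<ge> 1 \<longrightarrow> a \<noteq> real n - 1/2))) \<longrightarrow>
        (\<forall>\<gamma>>0. \<forall>\<eta>>0. \<exists>\<delta>>0. \<forall>lam :: nat \<Rightarrow> real.
           (\<forall>k\<in>{1..p}. lam k > 0) \<and> ord_stat p lam (nat (kstar p a)) < \<delta> \<longrightarrow>
           0 \<le> condE p a b c lam (\<lambda>t. t / (\<gamma> + t))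
           \<and> condE p a b c lam (\<lambda>t. t / (\<gamma> + t)) < ennreal \<eta>))"
  unfolding Let_def
  using kstar_range[OF ha hap] condE_powr_neg_le[OF ha hb hc hap] condE_shrinkage_le[OF ha hb hc hap]
    condE_shrinkage_vanishes[OF ha hb hc hap]
  by auto

end
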